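(* Let $T(z) = z + c z^{d+1} + O(z^{d+2})$ be a holomorphic germ at $0$ with $c \neq 0$ and $d \geq 1$. Let $B_0$ be an open ball centred at a point $z_0$ such that for every $n\ge 0$ the backward iterate $T^{-n}$ is defined and univalent on $B_0$, and $T^{-n}\to 0$ uniformly on $B_0$ as $n\to\infty$. Put $B_n = T^{-n}(B_0)$ and $z_n = T^{-n}(z_0)$. Then there is a constant $C>0$ such that $d(z_n, \partial B_n) \geq C |z_n|^{d+1}$ for all sufficiently large $n$.
   Context: $d(z,\partial B)$ denotes the Euclidean distance from the point $z$ to the boundary of the set $B$. *)

theory Defs
  imports "HOL-Complex_Analysis.Complex_Analysis"
begin

end

theory Submission
  imports Defs
begin

(*
  Near 0 the germ T is injective, and on the disc of radius |v|^(d+1) about v it is Lipschitz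
  with constant (1 + K |v|^(d+1)) |T v / v|^(d+1), because there T' differs from (T v / v)^(d+1)
  only by O(|v|^(d+1)).  So if w_n = g n z0 and the disc of radius s |w_n|^(d+1) about w_n lies
  in B_n, then T maps the disc of radius s |w_(n+1)|^(d+1) / (1 + K |w_(n+1)|^(d+1)) about
  w_(n+1) into it, and by injectivity of T this disc lies in B_(n+1).  Starting from a disc inside
  the open set B_N, the radii lose only the factor prod_k (1 + K |w_k|^(d+1)), which is bounded
  since sum_n |w_n|^(d+1) < oo: in the Fatou coordinate 1/z^d the map T is asymptotically the
  translation by -d c, so 1/w_n^d grows linearly and |w_n|^(d+1) = O(n^(-(d+1)/d)).
*)

lemma norm_power_one_plus_sub_linear_le:
  fixes x :: "'a::real_normed_field"
  assumes "norm x \<le> 1"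
  shows "norm ((1 + x) ^ m - 1 - of_nat m * x) \<le> 4 ^ m * norm x ^ 2"
proof (induction m)
  case 0
  then show ?case by simp
next
  case (Suc m)
  have "(1 + x) ^ Suc m - 1 - of_nat (Suc m) * x = (1 + x) * ((1 + x) ^ m - 1 - of_nat m * x) + of_nat m * x ^ 2"
    by (simp add: algebra_simps power2_eq_square)
  also have "norm \<dots> \<le> 2 * (4 ^ m * norm x ^ 2) + of_nat m * norm x ^ 2"
  proof -
    have "norm (1 + x) \<le> 2"
      using assms norm_triangle_ineq[of 1 x] by simp
    then have "norm ((1 + x) * ((1 + x) ^ m - 1 - of_nat m * x)) \<le> 2 * (4 ^ m * norm x ^ 2)"
      unfolding norm_mult using Suc.IH by (intro mult_mono) auto
    moreover have "norm (of_nat m * x ^ 2) = real m * norm x ^ 2"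
      by (simp add: norm_mult norm_power)
    ultimately show ?thesis
      using norm_triangle_ineq[of "(1 + x) * ((1 + x) ^ m - 1 - of_nat m * x)" "of_nat m * x ^ 2"]
      by linarith
  qed
  also have "\<dots> \<le> 4 ^ Suc m * norm x ^ 2"
  proof -
    have "real m \<le> 2 ^ m"
      using less_exp[of m] by (simp add: less_imp_le)
    also have "(2::real) ^ m \<le> 4 ^ m"
      by (rule power_mono) auto
    finally have "real m \<le> 2 * 4 ^ m"
      using zero_le_power[of "4::real" m] by linarith
    then have "real m * norm x ^ 2 \<le> 2 * 4 ^ m * norm x ^ 2"
      by (simp add: mult_right_mono)
    then show ?thesis
      by (simp add: algebra_simps)
  qed
  finally show ?case .
qed

lemma infdist_frontier_ge_radius:
  fixes x :: "'a::euclidean_space"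
  assumes "ball x s \<subseteq> S" "bounded S"
  shows "s \<le> infdist x (frontier S)"
proof (cases "s > 0")
  case True
  then have "frontier S \<noteq> {}"
    using assms frontier_eq_empty[of S] not_bounded_UNIV by force
  moreover have "s \<le> dist x y" if "y \<in> frontier S" for y
    using that assms(1) interior_maximal[OF assms(1) open_ball]
    by (auto simp: frontier_def subset_iff not_less[symmetric])
  ultimately show ?thesis
    by (simp add: infdist_notempty cINF_greatest)
qed (use infdist_nonneg in \<open>auto simp: not_less intro: order_trans\<close>)

lemma prod_one_plus_le_exp_suminf:
  fixes x :: "nat \<Rightarrow> real"
  assumes "finite A" "\<And>k. 0 \<le> x k" "summable x"
  shows "(\<Prod>k\<in>A. 1 + x k) \<le> exp (suminf x)"
proof -
  have "(\<Prod>k\<in>A. 1 + x k) \<le> (\<Prod>k\<in>A. exp (x k))"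
    using assms(2) by (intro prod_mono) (auto intro: add_nonneg_nonneg)
  also have "\<dots> = exp (sum x A)"
    using assms(1) by (simp add: exp_sum)
  also have "\<dots> \<le> exp (suminf x)"
    using assms by (simp add: sum_le_suminf)
  finally show ?thesis .
qed

lemma lipschitz_image_ball_subset:
  fixes f :: "'a::metric_space \<Rightarrow> 'b::metric_space"
  assumes "0 < L" "\<And>u. u \<in> ball v s \<Longrightarrow> dist (f u) (f v) \<le> L * dist u v"
  shows "f ` ball v s \<subseteq> ball (f v) (L * s)"
proof
  fix y assume "y \<in> f ` ball v s"
  then obtain u where u: "u \<in> ball v s" "y = f u" by blast
  have "L * dist u v < L * s"
    using u(1) assms(1) by (simp add: dist_commute)
  then have "dist (f u) (f v) < L * s"
    using assms(2)[OF u(1)] by linarith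
  then show "y \<in> ball (f v) (L * s)"
    using u by (simp add: dist_commute)
qed

lemma increments_tendsto_imp_linear_growth:
  fixes \<psi> :: "nat \<Rightarrow> 'a::real_normed_vector"
  assumes lim: "(\<lambda>n. \<psi> (Suc n) - \<psi> n) \<longlonglongrightarrow> D" and "D \<noteq> 0"
  shows "\<forall>\<^sub>F n in sequentially. real n * norm D / 2 \<le> norm (\<psi> n)"
proof -
  obtain N where N: "\<And>n. n \<ge> N \<Longrightarrow> norm (\<psi> (Suc n) - \<psi> n - D) \<le> norm D / 4"
    using lim \<open>D \<noteq> 0\<close> unfolding tendsto_iff eventually_sequentially dist_norm
    by (metis less_imp_le zero_less_divide_iff zero_less_norm_iff zero_less_numeral)
  have drift: "norm (\<psi> n - \<psi> N - real (n - N) *\<^sub>R D) \<le> real (n - N) * norm D / 4" if "n \<ge> N" for n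
    using that
  proof (induction n rule: dec_induct)
    case (step n)
    have telescope: "\<psi> (Suc n) - \<psi> N - real (Suc n - N) *\<^sub>R D
          = (\<psi> n - \<psi> N - real (n - N) *\<^sub>R D) + (\<psi> (Suc n) - \<psi> n - D)"
      using step.hyps by (simp add: Suc_diff_le of_nat_diff field_simps)
    have radius: "real (Suc n - N) * norm D / 4 = real (n - N) * norm D / 4 + norm D / 4"
      using step.hyps by (simp add: Suc_diff_le of_nat_diff field_simps)
    show ?case
      unfolding telescope using radius step.IH N[OF step.hyps(1)]
        norm_triangle_ineq[of "\<psi> n - \<psi> N - real (n - N) *\<^sub>R D" "\<psi> (Suc n) - \<psi> n - D"]
      by linarith
  qed (simp)
  obtain N' :: nat where N': "3 * real N + 4 * norm (\<psi> N) / norm D \<le> real N'"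
    using real_arch_simple by blast
  have "real n * norm D / 2 \<le> norm (\<psi> n)" if "n \<ge> max N N'" for n
  proof -
    have "3 * real N * norm D + 4 * norm (\<psi> N) \<le> real n * norm D"
      using N' that \<open>D \<noteq> 0\<close> mult_right_mono[of "3 * real N + 4 * norm (\<psi> N) / norm D" "real n" "norm D"]
      by (simp add: algebra_simps)
    moreover have "real (n - N) * norm D \<le> norm (\<psi> n) + norm (\<psi> N) + norm (\<psi> n - \<psi> N - real (n - N) *\<^sub>R D)"
      using norm_triangle_ineq4[of "\<psi> n - \<psi> N" "\<psi> n - \<psi> N - real (n - N) *\<^sub>R D"]
        norm_triangle_ineq4[of "\<psi> n" "\<psi> N"]
      by simp
    moreover have "norm (\<psi> n - \<psi> N - real (n - N) *\<^sub>R D) \<le> real (n - N) * norm D / 4"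
      using drift that by simp
    ultimately show ?thesis
      using that by (simp add: of_nat_diff algebra_simps)
  qed
  then show ?thesis
    unfolding eventually_sequentially by blast
qed

lemma summable_orbit_norm_power_if_fatou_tendsto:
  fixes T :: "complex \<Rightarrow> complex" and w :: "nat \<Rightarrow> complex"
  assumes d: "d \<ge> 1" and D: "D \<noteq> 0"
    and fatou: "((\<lambda>v. 1 / v ^ d - 1 / T v ^ d) \<longlongrightarrow> D) (at 0)"
    and w_lim: "w \<longlonglongrightarrow> 0"
    and w_nz: "\<forall>\<^sub>F n in sequentially. w n \<noteq> 0"
    and w_orbit: "\<forall>\<^sub>F n in sequentially. T (w (Suc n)) = w n"
  shows "summable (\<lambda>n. norm (w n) ^ (d + 1))"
proof -
  define \<psi> where "\<psi> n = 1 / w n ^ d" for n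
  have "filterlim (\<lambda>n. w (Suc n)) (at 0) sequentially"
    using w_lim w_nz eventually_sequentially_Suc[of "\<lambda>n. w n \<noteq> 0"]
    by (intro filterlim_atI LIMSEQ_Suc) simp_all
  then have "(\<lambda>n. 1 / w (Suc n) ^ d - 1 / T (w (Suc n)) ^ d) \<longlonglongrightarrow> D"
    by (rule filterlim_compose[OF fatou])
  moreover have "\<forall>\<^sub>F n in sequentially. 1 / w (Suc n) ^ d - 1 / T (w (Suc n)) ^ d = \<psi> (Suc n) - \<psi> n"
    using w_orbit by eventually_elim (simp add: \<psi>_def)
  ultimately have "(\<lambda>n. \<psi> (Suc n) - \<psi> n) \<longlonglongrightarrow> D"
    by (rule Lim_transform_eventually)
  then have growth: "\<forall>\<^sub>F n in sequentially. real n * norm D / 2 \<le> norm (\<psi> n)"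
    using D by (rule increments_tendsto_imp_linear_growth)
  define p where "p = (real d + 1) / real d"
  have p: "p > 1"
    using d by (simp add: p_def)
  have bound: "\<forall>\<^sub>F n in sequentially. norm (w n) ^ (d + 1) \<le> (2 / norm D) powr p * real n powr (- p)"
    using growth w_nz eventually_gt_at_top[of 0]
  proof eventually_elim
    case (elim n)
    then have wn: "norm (w n) > 0" and nD: "real n * norm D > 0"
      using D by auto
    have "norm (w n) ^ d = 1 / norm (\<psi> n)"
      by (simp add: \<psi>_def norm_divide norm_power)
    also have "\<dots> \<le> 2 / (real n * norm D)"
      using elim(1) nD by (simp add: divide_simps)
    finally have le: "norm (w n) ^ d \<le> 2 / (real n * norm D)" .
    have "(norm (w n) ^ d) powr p = norm (w n) powr (real d * p)"
      using wn by (simp add: powr_realpow[symmetric] powr_powr)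
    also have "real d * p = real (d + 1)"
      using d by (simp add: p_def)
    finally have "norm (w n) ^ (d + 1) = (norm (w n) ^ d) powr p"
      by (simp only: powr_realpow[OF wn])
    also have "\<dots> \<le> (2 / (real n * norm D)) powr p"
      using le p by (intro powr_mono2) auto
    also have "\<dots> = (2 / norm D) powr p * real n powr (- p)"
      using nD D by (simp add: powr_divide powr_mult powr_minus divide_simps)
    finally show ?case .
  qed
  have majorant: "summable (\<lambda>n. (2 / norm D) powr p * real n powr (- p))"
    using p by (intro summable_mult) (simp add: summable_real_powr_iff)
  from bound have "\<forall>\<^sub>F n in sequentially. norm (norm (w n) ^ (d + 1)) \<le> (2 / norm D) powr p * real n powr (- p)"
    by eventually_elim simp
  then show ?thesis
    using majorant by (rule summable_comparison_test_ev)
qed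

lemma holomorphic_deriv_locally_lipschitz:
  assumes "f holomorphic_on U" "open U" "x \<in> U"
  obtains B \<epsilon> where "0 \<le> B" "0 < \<epsilon>" "ball x \<epsilon> \<subseteq> U"
    "\<And>u v. u \<in> ball x \<epsilon> \<Longrightarrow> v \<in> ball x \<epsilon> \<Longrightarrow> norm (deriv f u - deriv f v) \<le> B * norm (u - v)"
proof -
  obtain \<epsilon> where \<epsilon>: "0 < \<epsilon>" "cball x \<epsilon> \<subseteq> U"
    using assms(2,3) open_contains_cball by blast
  have hol2: "deriv (deriv f) holomorphic_on U"
    using assms(1,2) by (intro holomorphic_deriv)
  have "compact (deriv (deriv f) ` cball x \<epsilon>)"
    using \<epsilon>(2) by (intro compact_continuous_image holomorphic_on_imp_continuous_on
        holomorphic_on_subset[OF hol2]) auto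
  then obtain B where B: "0 < B" "\<And>z. z \<in> cball x \<epsilon> \<Longrightarrow> norm (deriv (deriv f) z) \<le> B"
    using compact_imp_bounded bounded_pos by (metis image_eqI)
  have "norm (deriv f u - deriv f v) \<le> B * norm (u - v)" if "u \<in> ball x \<epsilon>" "v \<in> ball x \<epsilon>" for u v
  proof (rule field_differentiable_bound[where S = "ball x \<epsilon>" and f' = "deriv (deriv f)"])
    fix z assume z: "z \<in> ball x \<epsilon>"
    then have "z \<in> U"
      using \<epsilon>(2) by auto
    then show "(deriv f has_field_derivative deriv (deriv f) z) (at z within ball x \<epsilon>)"
      using holomorphic_deriv[OF assms(1,2)] assms(2) by (intro holomorphic_derivI)
    show "norm (deriv (deriv f) z) \<le> B"
      using z B(2) by auto
  qed (use that in auto)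
  then show thesis
    using B(1) \<epsilon> by (intro that[of B \<epsilon>]) auto
qed

lemma ball_subset_backward_images:
  assumes inj: "inj_on T S"
    and branch_S: "\<And>n. n \<ge> N \<Longrightarrow> g (Suc n) ` X \<subseteq> S"
    and branch: "\<And>n x. x \<in> X \<Longrightarrow> T (g (Suc n) x) = g n x"
    and base: "ball (g N a) (\<sigma> N) \<subseteq> g N ` X"
    and maps_into: "\<And>n. n \<ge> N \<Longrightarrow> ball (g (Suc n) a) (\<sigma> (Suc n)) \<subseteq> S \<and>
                 T ` ball (g (Suc n) a) (\<sigma> (Suc n)) \<subseteq> ball (g n a) (\<sigma> n)"
    and "n \<ge> N"
  shows "ball (g n a) (\<sigma> n) \<subseteq> g n ` X"
  using \<open>n \<ge> N\<close>
proof (induction n rule: dec_induct)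
  case (step n)
  show ?case
  proof
    fix u assume u: "u \<in> ball (g (Suc n) a) (\<sigma> (Suc n))"
    then have "T u \<in> g n ` X"
      using step.IH maps_into[OF step.hyps(1)] by blast
    then obtain x where x: "x \<in> X" "T u = T (g (Suc n) x)"
      using branch by force
    have "u \<in> S" "g (Suc n) x \<in> S"
      using u x(1) maps_into[OF step.hyps(1)] branch_S[OF step.hyps(1)] by blast+
    then have "u = g (Suc n) x"
      using inj_onD[OF inj x(2)] by blast
    then show "u \<in> g (Suc n) ` X"
      using x(1) by blast
  qed
qed (rule base)

lemma eventually_at_0_norm_less:
  fixes r :: real
  assumes "0 < r"
  shows "\<forall>\<^sub>F z in at (0::'a::real_normed_vector). z \<noteq> 0 \<and> norm z < r"
  using eventually_at_in_open[of "ball 0 r" 0] assms by (auto elim!: eventually_mono)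

locale parabolic_germ =
  fixes T :: "complex \<Rightarrow> complex" and U :: "complex set"
    and c :: complex and d :: nat and M \<delta> :: real
  assumes open_U: "open U" and zero_in_U: "0 \<in> U"
    and holomorphic_T: "T holomorphic_on U"
    and d_ge_1: "1 \<le> d" and \<delta>_pos: "0 < \<delta>"
    and remainder_le: "\<And>z. norm z < \<delta> \<Longrightarrow> norm (T z - z - c * z ^ (d + 1)) \<le> M * norm z ^ (d + 2)"
begin

definition remainder :: "complex \<Rightarrow> complex" where
  "remainder z = T z - z - c * z ^ (d + 1)"

lemma T_0: "T 0 = 0"
  using remainder_le[of 0] \<delta>_pos by simp

lemma M_nonneg: "0 \<le> M"
proof -
  let ?z = "complex_of_real (\<delta> / 2)"
  have "norm ?z < \<delta>"
    using \<delta>_pos by simp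
  then have "norm (T ?z - ?z - c * ?z ^ (d + 1)) \<le> M * norm ?z ^ (d + 2)"
    by (rule remainder_le)
  then have "0 \<le> M * norm ?z ^ (d + 2)"
    by (rule order_trans[OF norm_ge_zero])
  moreover have "0 < norm ?z ^ (d + 2)"
    using \<delta>_pos by simp
  ultimately show ?thesis
    using mult_le_cancel_right_pos[of "norm ?z ^ (d + 2)" 0 M] by simp
qed

lemma holomorphic_remainder: "remainder holomorphic_on U"
  unfolding remainder_def[abs_def] using holomorphic_T by (intro holomorphic_intros)

lemma remainder_quotient_tendsto: "((\<lambda>z. remainder z / z ^ (d + 1)) \<longlongrightarrow> 0) (at 0)"
proof (rule Lim_null_comparison)
  show "\<forall>\<^sub>F z in at 0. norm (remainder z / z ^ (d + 1)) \<le> M * norm z"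
    using eventually_at_0_norm_less[OF \<delta>_pos]
  proof eventually_elim
    case (elim z)
    then have "norm (remainder z) \<le> M * norm z * norm z ^ (d + 1)"
      using remainder_le[of z] by (simp add: remainder_def)
    then show ?case
      using elim by (simp add: norm_divide norm_mult norm_power divide_le_eq)
  qed
  show "((\<lambda>z. M * norm z) \<longlongrightarrow> 0) (at 0)"
    by (auto intro!: tendsto_eq_intros)
qed

lemma quotient_expansion_tendsto: "((\<lambda>z. (T z / z - 1) / z ^ d) \<longlongrightarrow> c) (at 0)"
proof (rule Lim_transform_eventually)
  show "((\<lambda>z. c + remainder z / z ^ (d + 1)) \<longlongrightarrow> c) (at 0)"
    using tendsto_add[OF tendsto_const remainder_quotient_tendsto] by simp
  show "\<forall>\<^sub>F z in at 0. c + remainder z / z ^ (d + 1) = (T z / z - 1) / z ^ d"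
    using eventually_at_0_norm_less[OF \<delta>_pos]
    by eventually_elim (simp add: remainder_def field_simps)
qed

lemma quotient_tendsto_1: "((\<lambda>z. T z / z) \<longlongrightarrow> 1) (at 0)"
proof (rule Lim_transform_eventually)
  have "((\<lambda>z. z ^ d) \<longlongrightarrow> 0 ^ d) (at (0::complex))"
    by (intro tendsto_intros)
  then have "((\<lambda>z. z ^ d) \<longlongrightarrow> 0) (at (0::complex))"
    using d_ge_1 by (simp add: zero_power)
  from tendsto_add[OF tendsto_const tendsto_mult[OF this quotient_expansion_tendsto]]
  show "((\<lambda>z. 1 + z ^ d * ((T z / z - 1) / z ^ d)) \<longlongrightarrow> 1) (at 0)"
    by simp
  show "\<forall>\<^sub>F z in at 0. 1 + z ^ d * ((T z / z - 1) / z ^ d) = T z / z"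
    using eventually_at_0_norm_less[OF \<delta>_pos] by eventually_elim simp
qed

lemma fatou_increment_tendsto: "((\<lambda>z. 1 / z ^ d - 1 / T z ^ d) \<longlongrightarrow> of_nat d * c) (at 0)"
proof (rule Lim_transform_eventually)
  let ?q = "\<lambda>z. T z / z"
  show "((\<lambda>z. (?q z - 1) / z ^ d * (\<Sum>i<d. ?q z ^ i) / ?q z ^ d) \<longlongrightarrow> of_nat d * c) (at 0)"
  proof -
    have "((\<lambda>z. \<Sum>i<d. ?q z ^ i) \<longlongrightarrow> (\<Sum>i<d. 1 ^ i)) (at 0)"
      by (intro tendsto_sum tendsto_power quotient_tendsto_1)
    then have "((\<lambda>z. (?q z - 1) / z ^ d * (\<Sum>i<d. ?q z ^ i) / ?q z ^ d)
        \<longlongrightarrow> c * (\<Sum>i<d. 1 ^ i) / 1 ^ d) (at 0)"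
      by (intro tendsto_divide tendsto_mult quotient_expansion_tendsto tendsto_power quotient_tendsto_1)
        (simp_all only: power_one one_neq_zero not_False_eq_True)
    also have "c * (\<Sum>i<d. 1 ^ i) / 1 ^ d = of_nat d * c"
      by simp
    finally show ?thesis .
  qed
  show "\<forall>\<^sub>F z in at 0. (?q z - 1) / z ^ d * (\<Sum>i<d. ?q z ^ i) / ?q z ^ d = 1 / z ^ d - 1 / T z ^ d"
    using eventually_at_0_norm_less[OF \<delta>_pos] tendsto_imp_eventually_ne[OF quotient_tendsto_1 one_neq_zero]
  proof eventually_elim
    case (elim z)
    define q where "q = T z / z"
    have q: "q \<noteq> 0" "T z = z * q"
      using elim by (auto simp: q_def)
    have "(q - 1) / z ^ d * (\<Sum>i<d. q ^ i) / q ^ d = (q ^ d - 1) / (z ^ d * q ^ d)"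
      by (simp add: power_diff_1_eq)
    also have "\<dots> = 1 / z ^ d - 1 / T z ^ d"
      using elim q by (simp add: power_mult_distrib diff_divide_distrib)
    finally show ?case
      by (simp add: q_def)
  qed
qed

lemma deriv_T_0: "deriv T 0 = 1"
proof -
  have "(T has_field_derivative 1) (at 0)"
    using quotient_tendsto_1 by (simp add: has_field_derivative_iff T_0)
  then show ?thesis
    by (rule DERIV_imp_deriv)
qed

lemma locally_injective:
  obtains \<rho> where "0 < \<rho>" "ball 0 \<rho> \<subseteq> U" "inj_on T (ball 0 \<rho>)"
proof -
  have "deriv T 0 \<noteq> 0"
    by (simp add: deriv_T_0)
  then show thesis
    using has_complex_derivative_locally_injective[OF holomorphic_T zero_in_U open_U] that by blast
qed

lemma deriv_T_eq: "z \<in> U \<Longrightarrow> deriv T z = 1 + of_nat (d + 1) * c * z ^ d + deriv remainder z"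
proof -
  assume z: "z \<in> U"
  have "(T has_field_derivative deriv T z) (at z)"
    using holomorphic_T open_U z by (rule holomorphic_derivI)
  moreover have "((\<lambda>z. c * z ^ (d + 1)) has_field_derivative c * (of_nat (d + 1) * (1 * z ^ (d + 1 - Suc 0)))) (at z)"
    by (intro DERIV_cmult DERIV_power[of "\<lambda>x. x", OF DERIV_ident])
  ultimately have "(remainder has_field_derivative deriv T z - 1 - c * (of_nat (d + 1) * (1 * z ^ (d + 1 - Suc 0)))) (at z)"
    unfolding remainder_def[abs_def] by (intro derivative_intros)
  then have "deriv remainder z = deriv T z - 1 - c * (of_nat (d + 1) * (1 * z ^ (d + 1 - Suc 0)))"
    by (rule DERIV_imp_deriv)
  then show ?thesis
    by (simp add: algebra_simps)
qed

lemma deriv_remainder_le: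
  "\<forall>\<^sub>F z in at 0. norm (deriv remainder z) \<le> 2 * M * (3 / 2) ^ (d + 2) * norm z ^ (d + 1)"
proof -
  obtain \<epsilon> where \<epsilon>: "0 < \<epsilon>" "ball 0 \<epsilon> \<subseteq> U"
    using open_U zero_in_U openE by blast
  define r where "r = min \<delta> \<epsilon>"
  have r: "0 < r" "r \<le> \<delta>" "ball 0 r \<subseteq> U"
    using \<epsilon> \<delta>_pos by (auto simp: r_def)
  have r': "0 < 2 * r / 3"
    using r by simp
  show ?thesis
    using eventually_at_0_norm_less[OF r']
  proof eventually_elim
    case (elim z)
    have disc: "cball z (norm z / 2) \<subseteq> ball 0 r"
    proof
      fix x assume "x \<in> cball z (norm z / 2)"
      then have "norm (x - z) \<le> norm z / 2"
        by (simp add: dist_norm norm_minus_commute)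
      then show "x \<in> ball 0 r"
        using elim norm_triangle_ineq2[of x z] by simp
    qed
    have "norm ((deriv ^^ 1) remainder z) \<le> fact 1 * (M * (3 / 2 * norm z) ^ (d + 2)) / (norm z / 2) ^ 1"
    proof (rule Cauchy_inequality)
      show "remainder holomorphic_on ball z (norm z / 2)" "continuous_on (cball z (norm z / 2)) remainder"
        using disc r(3) holomorphic_remainder ball_subset_cball
        by (blast intro: holomorphic_on_subset holomorphic_on_imp_continuous_on)+
      show "0 < norm z / 2"
        using elim by simp
      fix x assume "norm (z - x) = norm z / 2"
      then have x: "norm x \<le> 3 / 2 * norm z"
        using norm_triangle_ineq2[of x z] by (simp add: norm_minus_commute)
      then have "norm x < \<delta>"
        using elim r(2) by linarith
      then have "norm (remainder x) \<le> M * norm x ^ (d + 2)"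
        unfolding remainder_def by (rule remainder_le)
      also have "\<dots> \<le> M * (3 / 2 * norm z) ^ (d + 2)"
        using x M_nonneg by (intro mult_left_mono power_mono) auto
      finally show "norm (remainder x) \<le> M * (3 / 2 * norm z) ^ (d + 2)" .
    qed
    then show ?case
      using elim by (simp add: power_mult_distrib field_simps)
  qed
qed

lemma power_quotient_expansion_le:
  "\<exists>K \<ge> 0. \<forall>\<^sub>F z in at 0.
     norm ((T z / z) ^ (d + 1) - (1 + of_nat (d + 1) * c * z ^ d)) \<le> K * norm z ^ (d + 1)"
proof (intro exI conjI)
  let ?K = "4 ^ (d + 1) * (norm c + 1) ^ 2 + real (d + 1) * M"
  show "0 \<le> ?K"
    using M_nonneg by simp
  have "\<forall>\<^sub>F z in at 0. norm ((T z / z - 1) / z ^ d) < norm c + 1"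
    using tendsto_norm[OF quotient_expansion_tendsto] by (rule order_tendstoD) simp
  moreover have "\<forall>\<^sub>F z in at 0. norm (T z / z - 1) < 1"
    using tendstoD[OF quotient_tendsto_1 zero_less_one] by (simp add: dist_norm)
  moreover have "\<forall>\<^sub>F z in at 0. z \<noteq> 0 \<and> norm z < min \<delta> 1"
    using \<delta>_pos by (intro eventually_at_0_norm_less) simp
  ultimately show "\<forall>\<^sub>F z in at 0.
      norm ((T z / z) ^ (d + 1) - (1 + of_nat (d + 1) * c * z ^ d)) \<le> ?K * norm z ^ (d + 1)"
  proof eventually_elim
    case (elim z)
    define a where "a = T z / z - 1"
    have z: "z \<noteq> 0" "norm z < \<delta>" "norm z \<le> 1"
      using elim by auto
    have a_le: "norm a \<le> (norm c + 1) * norm z ^ d"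
      using elim(1) z by (simp add: a_def norm_divide norm_power divide_less_eq less_imp_le)
    have "norm a ^ 2 \<le> (norm c + 1) ^ 2 * norm z ^ (2 * d)"
      using power_mono[OF a_le, of 2] by (simp add: power_mult_distrib power_mult mult.commute)
    also have "\<dots> \<le> (norm c + 1) ^ 2 * norm z ^ (d + 1)"
      using z d_ge_1 by (intro mult_left_mono power_decreasing) auto
    finally have a_sq: "norm a ^ 2 \<le> (norm c + 1) ^ 2 * norm z ^ (d + 1)" .
    have "a - c * z ^ d = remainder z / z"
      using z by (simp add: a_def remainder_def diff_divide_distrib)
    then have a_lin: "norm (a - c * z ^ d) \<le> M * norm z ^ (d + 1)"
      using z remainder_le[of z]
      by (simp add: remainder_def norm_divide divide_le_eq mult.commute mult.left_commute)
    have "(T z / z) ^ (d + 1) - (1 + of_nat (d + 1) * c * z ^ d)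
        = ((1 + a) ^ (d + 1) - 1 - of_nat (d + 1) * a) + of_nat (d + 1) * (a - c * z ^ d)"
      by (simp add: a_def algebra_simps)
    also have "norm \<dots> \<le> 4 ^ (d + 1) * norm a ^ 2 + real (d + 1) * (M * norm z ^ (d + 1))"
    proof -
      have "norm (of_nat (d + 1) * (a - c * z ^ d)) \<le> real (d + 1) * (M * norm z ^ (d + 1))"
        using a_lin by (simp add: norm_mult mult_left_mono del: of_nat_Suc)
      then show ?thesis
        using norm_power_one_plus_sub_linear_le[of a "d + 1"] elim(2) norm_triangle_ineq[of
            "(1 + a) ^ (d + 1) - 1 - of_nat (d + 1) * a" "of_nat (d + 1) * (a - c * z ^ d)"]
        by (simp add: a_def)
    qed
    also have "\<dots> \<le> ?K * norm z ^ (d + 1)"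
      using a_sq by (simp add: algebra_simps)
    finally show ?case .
  qed
qed

lemma deriv_le_quotient_power:
  "\<exists>K \<ge> 0. \<forall>\<^sub>F v in at 0. norm (deriv T v) \<le> norm (T v / v) ^ (d + 1) + K * norm v ^ (d + 1)"
proof -
  obtain K where K: "0 \<le> K" and expansion: "\<forall>\<^sub>F v in at 0.
      norm ((T v / v) ^ (d + 1) - (1 + of_nat (d + 1) * c * v ^ d)) \<le> K * norm v ^ (d + 1)"
    using power_quotient_expansion_le by blast
  obtain \<epsilon> where \<epsilon>: "0 < \<epsilon>" "ball 0 \<epsilon> \<subseteq> U"
    using open_U zero_in_U openE by blast
  define K' where "K' = 2 * M * (3 / 2) ^ (d + 2) + K"
  from eventually_at_0_norm_less[OF \<epsilon>(1)] deriv_remainder_le expansion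
  have "\<forall>\<^sub>F v in at 0. norm (deriv T v) \<le> norm (T v / v) ^ (d + 1) + K' * norm v ^ (d + 1)"
  proof eventually_elim
    case (elim v)
    let ?P = "1 + of_nat (d + 1) * c * v ^ d" and ?Q = "(T v / v) ^ (d + 1)"
    have "norm (deriv T v) \<le> norm ?P + 2 * M * (3 / 2) ^ (d + 2) * norm v ^ (d + 1)"
      using deriv_T_eq[of v] \<epsilon>(2) elim(1,2) norm_triangle_ineq[of ?P "deriv remainder v"] by auto
    moreover have "norm ?P \<le> norm ?Q + norm (?Q - ?P)"
      using norm_triangle_ineq2[of ?P ?Q] norm_minus_commute[of ?P ?Q] by linarith
    ultimately show ?case
      using elim(3) norm_power[of "T v / v" "d + 1"] by (simp add: K'_def algebra_simps)
  qed
  moreover have "0 \<le> K'"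
    using K M_nonneg by (simp add: K'_def)
  ultimately show ?thesis
    by blast
qed

lemma deriv_le_near_orbit:
  "\<exists>K \<ge> 0. \<forall>\<^sub>F v in at 0. \<forall>u \<in> ball v (norm v ^ (d + 1)).
     norm (deriv T u) \<le> (1 + K * norm v ^ (d + 1)) * norm (T v / v) ^ (d + 1)"
proof -
  obtain B \<epsilon> where B: "0 \<le> B" "0 < \<epsilon>" "ball 0 \<epsilon> \<subseteq> U"
    and lip: "\<And>u v. u \<in> ball 0 \<epsilon> \<Longrightarrow> v \<in> ball 0 \<epsilon> \<Longrightarrow> norm (deriv T u - deriv T v) \<le> B * norm (u - v)"
    using holomorphic_deriv_locally_lipschitz[OF holomorphic_T open_U zero_in_U] by blast
  obtain K where K: "0 \<le> K" and deriv_le: "\<forall>\<^sub>F v in at 0.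
      norm (deriv T v) \<le> norm (T v / v) ^ (d + 1) + K * norm v ^ (d + 1)"
    using deriv_le_quotient_power by blast
  have lower: "\<forall>\<^sub>F v in at 0. 1 / 2 < norm (T v / v) ^ (d + 1)"
    using tendsto_power[OF tendsto_norm[OF quotient_tendsto_1], of "d + 1"] by (rule order_tendstoD) simp
  have "0 < min (\<epsilon> / 2) 1"
    using B by simp
  from eventually_at_0_norm_less[OF this] deriv_le lower
  have "\<forall>\<^sub>F v in at 0. \<forall>u \<in> ball v (norm v ^ (d + 1)).
      norm (deriv T u) \<le> (1 + 2 * (B + K) * norm v ^ (d + 1)) * norm (T v / v) ^ (d + 1)"
  proof eventually_elim
    case (elim v)
    let ?e = "norm v ^ (d + 1)" and ?q = "norm (T v / v) ^ (d + 1)"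
    have e_le: "?e \<le> norm v"
      using elim power_decreasing[of 1 "d + 1" "norm v"] by simp
    have "norm v < \<epsilon>"
      using elim(1) norm_ge_zero[of v] by linarith
    then have v: "v \<in> ball 0 \<epsilon>"
      by simp
    have "(B + K) * ?e * 1 \<le> (B + K) * ?e * (2 * ?q)"
      using elim(3) B(1) K by (intro mult_left_mono) auto
    then have deriv_v: "norm (deriv T v) + B * ?e \<le> (1 + 2 * (B + K) * ?e) * ?q"
      using elim(2) by (simp add: algebra_simps)
    show ?case
    proof
      fix u assume u: "u \<in> ball v ?e"
      then have "norm (u - v) < ?e"
        by (simp add: dist_norm norm_minus_commute)
      then have "norm u < \<epsilon>"
        using e_le elim(1) norm_triangle_ineq2[of u v] by linarith
      then have "norm (deriv T u - deriv T v) \<le> B * ?e"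
        using lip[OF _ v] u B(1) mult_left_mono[of "norm (u - v)" ?e B]
        by (fastforce simp: dist_norm norm_minus_commute)
      then show "norm (deriv T u) \<le> (1 + 2 * (B + K) * ?e) * ?q"
        using deriv_v norm_triangle_ineq2[of "deriv T u" "deriv T v"] by linarith
    qed
  qed
  then show ?thesis
    using B(1) K by (intro exI[of _ "2 * (B + K)"]) auto
qed

lemma injective_and_lipschitz_near_0:
  obtains \<rho> K where "0 < \<rho>" "\<rho> \<le> 1" "0 \<le> K" "inj_on T (ball 0 (2 * \<rho>))"
    "\<And>v u. norm v < \<rho> \<Longrightarrow> u \<in> ball v (norm v ^ (d + 1)) \<Longrightarrow>
       norm (T u - T v) \<le> (1 + K * norm v ^ (d + 1)) * norm (T v / v) ^ (d + 1) * norm (u - v)"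
proof -
  obtain K where K: "0 \<le> K" and "\<forall>\<^sub>F v in at 0. \<forall>u \<in> ball v (norm v ^ (d + 1)).
      norm (deriv T u) \<le> (1 + K * norm v ^ (d + 1)) * norm (T v / v) ^ (d + 1)"
    using deriv_le_near_orbit by blast
  then obtain r1 where r1: "0 < r1" and deriv_le: "\<And>v u. v \<noteq> 0 \<Longrightarrow> norm v < r1 \<Longrightarrow>
      u \<in> ball v (norm v ^ (d + 1)) \<Longrightarrow> norm (deriv T u) \<le> (1 + K * norm v ^ (d + 1)) * norm (T v / v) ^ (d + 1)"
    unfolding eventually_at by (auto simp: dist_norm)
  obtain r2 where r2: "0 < r2" "ball 0 r2 \<subseteq> U" "inj_on T (ball 0 r2)"
    by (rule locally_injective)
  define \<rho> where "\<rho> = min 1 (min r1 (r2 / 2))"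
  show thesis
  proof (rule that[of \<rho> K])
    show "0 < \<rho>" "\<rho> \<le> 1" "0 \<le> K"
      using r1 r2 K by (auto simp: \<rho>_def)
    show "inj_on T (ball 0 (2 * \<rho>))"
      using r2(3) by (rule inj_on_subset) (auto simp: \<rho>_def)
    fix v u :: complex assume v: "norm v < \<rho>" and u: "u \<in> ball v (norm v ^ (d + 1))"
    define S where "S = ball v (norm v ^ (d + 1))"
    have "v \<noteq> 0"
      using u by auto
    have e_le: "norm v ^ (d + 1) \<le> norm v"
      using v power_decreasing[of 1 "d + 1" "norm v"] by (simp add: \<rho>_def)
    have "S \<subseteq> U"
    proof
      fix x assume "x \<in> S"
      then have "norm (x - v) < norm v ^ (d + 1)"
        by (simp add: S_def dist_norm norm_minus_commute)
      then have "norm x < r2"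
        using e_le v norm_triangle_ineq2[of x v] by (simp add: \<rho>_def)
      then show "x \<in> U"
        using r2(2) by auto
    qed
    show "norm (T u - T v) \<le> (1 + K * norm v ^ (d + 1)) * norm (T v / v) ^ (d + 1) * norm (u - v)"
    proof (rule field_differentiable_bound[where S = S and f' = "deriv T"])
      show "convex S"
        by (simp add: S_def)
      fix z assume "z \<in> S"
      then show "(T has_field_derivative deriv T z) (at z within S)"
        using \<open>S \<subseteq> U\<close> holomorphic_T open_U by (blast intro: holomorphic_derivI)
      show "norm (deriv T z) \<le> (1 + K * norm v ^ (d + 1)) * norm (T v / v) ^ (d + 1)"
        using deriv_le[OF \<open>v \<noteq> 0\<close>, of z] \<open>z \<in> S\<close> v by (simp add: S_def \<rho>_def)
    qed (use u \<open>v \<noteq> 0\<close> in \<open>auto simp: S_def\<close>)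
  qed
qed

lemma summable_orbit_norm_power:
  assumes "c \<noteq> 0" and w_lim: "w \<longlonglongrightarrow> 0" and w_orbit: "\<And>n. T (w (Suc n)) = w n"
  shows "summable (\<lambda>n. norm (w n) ^ (d + 1))"
proof -
  obtain \<rho> where \<rho>: "0 < \<rho>" "inj_on T (ball 0 \<rho>)"
    using locally_injective by blast
  obtain N where N: "\<And>n. n \<ge> N \<Longrightarrow> w n \<in> ball 0 \<rho>"
    using w_lim \<rho>(1) unfolding lim_sequentially by (auto simp: dist_norm)
  show ?thesis
  proof (cases "\<exists>m \<ge> N. w m = 0")
    case True
    then obtain m where m: "m \<ge> N" "w m = 0"
      by blast
    have "w n = 0" if "n \<ge> m" for n
      using that
    proof (induction n rule: dec_induct)
      case (step n)
      then have "T (w (Suc n)) = T 0"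
        using w_orbit[of n] T_0 by simp
      then show ?case
        using inj_onD[OF \<rho>(2)] N[of "Suc n"] \<rho>(1) step.hyps m(1) by auto
    qed (use m in simp)
    then have "\<forall>\<^sub>F n in sequentially. norm (w n) ^ (d + 1) = 0"
      unfolding eventually_sequentially using d_ge_1 by auto
    from summable_cong[OF this] show ?thesis
      by simp
  next
    case False
    then show ?thesis
      using d_ge_1 \<open>c \<noteq> 0\<close> w_lim w_orbit
      by (intro summable_orbit_norm_power_if_fatou_tendsto[OF _ _ fatou_increment_tendsto])
        (auto simp: eventually_sequentially)
  qed
qed

end


lemma image_ball_near_orbit:
  fixes T :: "complex \<Rightarrow> complex"
  assumes \<rho>: "0 < \<rho>" "\<rho> \<le> 1" and K: "0 \<le> K"
    and T_0: "T 0 = 0" and inj: "inj_on T (ball 0 (2 * \<rho>))"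
    and lip: "\<And>v u. norm v < \<rho> \<Longrightarrow> u \<in> ball v (norm v ^ (d + 1)) \<Longrightarrow>
       norm (T u - T v) \<le> (1 + K * norm v ^ (d + 1)) * norm (T v / v) ^ (d + 1) * norm (u - v)"
    and v: "norm v < \<rho>" and s: "0 \<le> s" "s \<le> 1"
  defines "\<sigma> \<equiv> s * norm v ^ (d + 1) / (1 + K * norm v ^ (d + 1))"
  shows "ball v \<sigma> \<subseteq> ball 0 (2 * \<rho>)" and "T ` ball v \<sigma> \<subseteq> ball (T v) (s * norm (T v) ^ (d + 1))"
proof -
  let ?e = "norm v ^ (d + 1)"
  have e_le: "?e \<le> norm v"
    using v \<rho>(2) power_decreasing[of 1 "d + 1" "norm v"] by simp
  have "s * ?e / (1 + K * ?e) \<le> 1 * ?e / 1"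
    using s K by (intro frac_le mult_right_mono) auto
  then have inner: "ball v \<sigma> \<subseteq> ball v ?e"
    by (intro subset_ball) (simp add: \<sigma>_def)
  have "ball v ?e \<subseteq> ball 0 (2 * \<rho>)"
  proof
    fix u assume "u \<in> ball v ?e"
    then have "norm (u - v) < ?e"
      by (simp add: dist_norm norm_minus_commute)
    then show "u \<in> ball 0 (2 * \<rho>)"
      using e_le v norm_triangle_ineq2[of u v] by simp
  qed
  with inner show "ball v \<sigma> \<subseteq> ball 0 (2 * \<rho>)"
    by blast
  show "T ` ball v \<sigma> \<subseteq> ball (T v) (s * norm (T v) ^ (d + 1))"
  proof (cases "v = 0")
    case True
    then show ?thesis
      by (simp add: \<sigma>_def)
  next
    case False
    have "T v \<noteq> 0"
      using inj_onD[OF inj, of v 0] False v \<rho>(1) T_0 by auto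
    define L where "L = (1 + K * ?e) * norm (T v / v) ^ (d + 1)"
    have L: "0 < L"
      using K \<open>T v \<noteq> 0\<close> False by (simp add: L_def add_pos_nonneg)
    have "L * \<sigma> = s * (norm (T v / v) ^ (d + 1) * ?e)"
      using K by (simp add: L_def \<sigma>_def add_nonneg_eq_0_iff)
    also have "\<dots> = s * norm (T v) ^ (d + 1)"
      using False by (simp add: norm_divide power_divide)
    finally have L\<sigma>: "L * \<sigma> = s * norm (T v) ^ (d + 1)" .
    have "T ` ball v \<sigma> \<subseteq> ball (T v) (L * \<sigma>)"
    proof (rule lipschitz_image_ball_subset[OF L])
      fix u assume "u \<in> ball v \<sigma>"
      then show "dist (T u) (T v) \<le> L * dist u v"
        using lip[OF v] inner by (force simp: L_def dist_norm)
    qed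
    then show ?thesis
      by (simp only: L\<sigma>)
  qed
qed

lemma balls_in_backward_branches_prod:
  fixes T :: "complex \<Rightarrow> complex" and g :: "nat \<Rightarrow> 'a \<Rightarrow> complex"
  assumes \<rho>: "0 < \<rho>" "\<rho> \<le> 1" "0 \<le> K"
    and T_0: "T 0 = 0" and inj: "inj_on T (ball 0 (2 * \<rho>))"
    and lip: "\<And>v u. norm v < \<rho> \<Longrightarrow> u \<in> ball v (norm v ^ (d + 1)) \<Longrightarrow>
       norm (T u - T v) \<le> (1 + K * norm v ^ (d + 1)) * norm (T v / v) ^ (d + 1) * norm (u - v)"
    and small: "\<And>n x. n \<ge> N \<Longrightarrow> x \<in> X \<Longrightarrow> g n x \<in> ball 0 \<rho>"
    and branch: "\<And>n x. x \<in> X \<Longrightarrow> T (g (Suc n) x) = g n x"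
    and a: "a \<in> X" and C: "0 \<le> C" "C \<le> 1"
    and base: "ball (g N a) (C * norm (g N a) ^ (d + 1)) \<subseteq> g N ` X"
    and "n \<ge> N"
  shows "ball (g n a) (C * norm (g n a) ^ (d + 1) / (\<Prod>k\<le>n. 1 + K * norm (g k a) ^ (d + 1))) \<subseteq> g n ` X"
proof -
  define P where "P n = (\<Prod>k\<le>n. 1 + K * norm (g k a) ^ (d + 1))" for n
  define \<sigma> where "\<sigma> n = C * norm (g n a) ^ (d + 1) / P n" for n
  have P: "1 \<le> P n" for n
    using \<rho>(3) by (auto simp: P_def intro: prod_ge_1)
  have small_a: "norm (g n a) < \<rho>" if "n \<ge> N" for n
    using small[OF that a] by simp
  have step: "ball (g (Suc n) a) (\<sigma> (Suc n)) \<subseteq> ball 0 (2 * \<rho>) \<and>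
      T ` ball (g (Suc n) a) (\<sigma> (Suc n)) \<subseteq> ball (g n a) (\<sigma> n)" if "n \<ge> N" for n
  proof -
    have Tg: "T (g (Suc n) a) = g n a"
      by (rule branch[OF a])
    have "0 \<le> C / P n" "C / P n \<le> 1"
      using P[of n] C by (auto simp: divide_le_eq)
    note image_ball_near_orbit[OF \<rho> T_0 inj lip small_a[OF le_SucI[OF that]] this]
    moreover have "\<sigma> (Suc n) = C / P n * norm (g (Suc n) a) ^ (d + 1) / (1 + K * norm (g (Suc n) a) ^ (d + 1))"
      by (simp add: \<sigma>_def P_def)
    moreover have "\<sigma> n = C / P n * norm (T (g (Suc n) a)) ^ (d + 1)"
      by (simp add: \<sigma>_def Tg)
    ultimately show ?thesis
      using that Tg by simp
  qed
  have "\<sigma> N \<le> C * norm (g N a) ^ (d + 1)"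
    using P[of N] C divide_left_mono[of 1 "P N" "C * norm (g N a) ^ (d + 1)"] by (simp add: \<sigma>_def)
  then have "ball (g N a) (\<sigma> N) \<subseteq> ball (g N a) (C * norm (g N a) ^ (d + 1))"
    by (rule subset_ball)
  with base have base': "ball (g N a) (\<sigma> N) \<subseteq> g N ` X"
    by blast
  have branch_small: "g (Suc n) ` X \<subseteq> ball 0 (2 * \<rho>)" if "n \<ge> N" for n
    using small[of "Suc n"] that \<rho>(1) by force
  show ?thesis
    using ball_subset_backward_images[where \<sigma> = \<sigma> and a = a, OF inj branch_small branch base' step \<open>n \<ge> N\<close>]
    by (simp add: \<sigma>_def P_def)
qed

lemma balls_in_backward_branches:
  fixes T :: "complex \<Rightarrow> complex" and g :: "nat \<Rightarrow> 'a \<Rightarrow> complex"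
  assumes \<rho>: "0 < \<rho>" "\<rho> \<le> 1" "0 \<le> K"
    and T_0: "T 0 = 0" and inj: "inj_on T (ball 0 (2 * \<rho>))"
    and lip: "\<And>v u. norm v < \<rho> \<Longrightarrow> u \<in> ball v (norm v ^ (d + 1)) \<Longrightarrow>
       norm (T u - T v) \<le> (1 + K * norm v ^ (d + 1)) * norm (T v / v) ^ (d + 1) * norm (u - v)"
    and small: "\<And>n x. n \<ge> N \<Longrightarrow> x \<in> X \<Longrightarrow> g n x \<in> ball 0 \<rho>"
    and branch: "\<And>n x. x \<in> X \<Longrightarrow> T (g (Suc n) x) = g n x"
    and summable: "summable (\<lambda>n. norm (g n a) ^ (d + 1))"
    and a: "a \<in> X" and \<epsilon>: "0 < \<epsilon>" "ball (g N a) \<epsilon> \<subseteq> g N ` X"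
  shows "\<exists>C > 0. \<forall>n \<ge> N. ball (g n a) (C * norm (g n a) ^ (d + 1)) \<subseteq> g n ` X"
proof (intro exI conjI allI impI)
  define x where "x k = K * norm (g k a) ^ (d + 1)" for k
  define C0 where "C0 = min \<epsilon> 1"
  have "summable x"
    using summable unfolding x_def by (rule summable_mult)
  moreover have x: "0 \<le> x k" for k
    using \<rho>(3) by (simp add: x_def)
  ultimately have P: "(\<Prod>k\<le>n. 1 + x k) \<le> exp (suminf x)" for n
    by (intro prod_one_plus_le_exp_suminf) auto
  have "C0 * norm (g N a) ^ (d + 1) \<le> \<epsilon> * 1"
    using small[OF order.refl a] \<rho> \<epsilon>(1) power_le_one[of "norm (g N a)" "d + 1"]
    by (intro mult_mono) (auto simp: C0_def)
  then have "ball (g N a) (C0 * norm (g N a) ^ (d + 1)) \<subseteq> ball (g N a) \<epsilon>"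
    by (intro subset_ball) simp
  with \<epsilon>(2) have base: "ball (g N a) (C0 * norm (g N a) ^ (d + 1)) \<subseteq> g N ` X"
    by blast
  show "0 < C0 / exp (suminf x)"
    using \<epsilon>(1) by (simp add: C0_def)
  fix n assume "n \<ge> N"
  have "C0 / exp (suminf x) * norm (g n a) ^ (d + 1) \<le> C0 * norm (g n a) ^ (d + 1) / (\<Prod>k\<le>n. 1 + x k)"
    using P[of n] \<epsilon>(1) x prod_pos[of "{..n}" "\<lambda>k. 1 + x k"]
    by (simp add: divide_left_mono C0_def add_pos_nonneg)
  then show "ball (g n a) (C0 / exp (suminf x) * norm (g n a) ^ (d + 1)) \<subseteq> g n ` X"
    using balls_in_backward_branches_prod[OF \<rho> T_0 inj lip small branch a _ _ base \<open>n \<ge> N\<close>] \<epsilon>(1)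
    by (auto simp: C0_def x_def intro: subset_ball order_trans)
qed

theorem lemma3p2:
  fixes T :: "complex \<Rightarrow> complex" and U :: "complex set"
    and c :: complex and d :: nat
    and z0 :: complex and r :: real
    and g :: "nat \<Rightarrow> complex \<Rightarrow> complex"
  assumes U: "open U" "0 \<in> U"
    and holT: "T holomorphic_on U"
    and germ: "\<exists>M \<delta>. \<delta> > 0 \<and> (\<forall>z. norm z < \<delta> \<longrightarrow>
                 norm (T z - z - c * z ^ (d + 1)) \<le> M * norm z ^ (d + 2))"
    and c: "c \<noteq> 0" and d: "d \<ge> 1"
    and r: "r > 0"
    and g0: "\<And>w. w \<in> ball z0 r \<Longrightarrow> g 0 w = w"
    and gU: "\<And>n w. w \<in> ball z0 r \<Longrightarrow> g (Suc n) w \<in> U"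
    and gT: "\<And>n w. w \<in> ball z0 r \<Longrightarrow> T (g (Suc n) w) = g n w"
    and ghol: "\<And>n. g n holomorphic_on ball z0 r"
    and ginj: "\<And>n. inj_on (g n) (ball z0 r)"
    and gunif: "uniform_limit (ball z0 r) g (\<lambda>_. 0) sequentially"
  shows "\<exists>C > 0. \<forall>\<^sub>F n in sequentially.
           infdist (g n z0) (frontier (g n ` ball z0 r)) \<ge> C * norm (g n z0) ^ (d + 1)"
proof -
  obtain M \<delta> where "0 < \<delta>" "\<And>z. norm z < \<delta> \<Longrightarrow> norm (T z - z - c * z ^ (d + 1)) \<le> M * norm z ^ (d + 2)"
    using germ by blast
  then interpret parabolic_germ T U c d M \<delta>
    using U holT d by unfold_locales auto
  obtain \<rho> K where \<rho>: "0 < \<rho>" "\<rho> \<le> 1" "0 \<le> K" and inj: "inj_on T (ball 0 (2 * \<rho>))"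
    and lip: "\<And>v u. norm v < \<rho> \<Longrightarrow> u \<in> ball v (norm v ^ (d + 1)) \<Longrightarrow>
       norm (T u - T v) \<le> (1 + K * norm v ^ (d + 1)) * norm (T v / v) ^ (d + 1) * norm (u - v)"
    using injective_and_lipschitz_near_0 by blast
  have "\<forall>\<^sub>F n in sequentially. \<forall>x \<in> ball z0 r. g n x \<in> ball 0 \<rho>"
    using uniform_limitD[OF gunif \<rho>(1)] by (simp add: dist_commute)
  then obtain N where small: "\<And>n x. n \<ge> N \<Longrightarrow> x \<in> ball z0 r \<Longrightarrow> g n x \<in> ball 0 \<rho>"
    unfolding eventually_sequentially by blast
  have z0: "z0 \<in> ball z0 r"
    using r by simp
  have summable: "summable (\<lambda>n. norm (g n z0) ^ (d + 1))"
    using tendsto_uniform_limitI[OF gunif z0] gT[OF z0] c by (intro summable_orbit_norm_power) auto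
  obtain \<epsilon> where \<epsilon>: "0 < \<epsilon>" "ball (g N z0) \<epsilon> \<subseteq> g N ` ball z0 r"
    using open_mapping_thm3[OF ghol open_ball ginj] z0 by (meson imageI openE)
  obtain C where "C > 0"
    and balls: "\<And>n. n \<ge> N \<Longrightarrow> ball (g n z0) (C * norm (g n z0) ^ (d + 1)) \<subseteq> g n ` ball z0 r"
    using balls_in_backward_branches[where g = g and a = z0, OF \<rho> T_0 inj lip small gT summable z0 \<epsilon>]
    by blast
  have "C * norm (g n z0) ^ (d + 1) \<le> infdist (g n z0) (frontier (g n ` ball z0 r))" if "n \<ge> N" for n
  proof (rule infdist_frontier_ge_radius[OF balls[OF that]])
    show "bounded (g n ` ball z0 r)"
      using small[OF that] by (blast intro: bounded_subset[OF bounded_ball])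
  qed
  then show ?thesis
    using \<open>C > 0\<close> unfolding eventually_sequentially by blast
qed

end
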